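(* Let $l$ and $m$ be positive integers and let $q(x)=x^6-(l+m+3)x^4+(lm+l+m+3)x^2-1$. Suppose $\pm\theta_1,\pm\theta_2,\pm\theta_3$ are the six roots of $q(x)$ in its splitting field over $\mathbb{Q}$. If $q(x)$ is irreducible over $\mathbb{Q}$, then $1,\theta_1,\theta_2,\theta_3$ are linearly independent over $\mathbb{Q}$.
   Context: The roots of $q$ are simple, nonzero and real, and come in pairs $\pm\theta_j$; the labeling means the six roots are $\theta_1,-\theta_1,\theta_2,-\theta_2,\theta_3,-\theta_3$. *)

theory Defs
  imports "HOL-Computational_Algebra.Computational_Algebra"
begin

definition q_poly :: "int \<Rightarrow> int \<Rightarrow> rat poly" where
  "q_poly l m = [:-1, 0, of_int (l*m + l + m + 3), 0, - of_int (l + m + 3), 0, 1:]"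

end

theory Submission
  imports Defs "HOL-Computational_Algebra.Field_as_Ring"
begin

(* Since q(x) = C(x^2) for the cubic C(y) = y^3 - (l+m+3) y^2 + (lm+l+m+3) y - 1, Vieta's
   formulas give t^2 + p^2 + s^2 = l+m+3 and t p s = e with e = 1 or -1 for the three roots t, p, s
   of q.  Given a relation a0 + a1 t + a2 p + a3 s = 0, the number X = t (a2^2 - a3^2) (p^2 - s^2)
   equals V(t^2) + t W(t^2) for rational polynomials V, W, whereas X^2 = G(t^2) is even in t.
   Since q is irreducible and even, -t satisfies every rational relation that t satisfies, so
   (V - t W)^2 = (V + t W)^2 at t^2, i.e. V W = 0 there.  As t^2 has degree 3 over Q, either case
   forces a0 a1 = a2 a3 = 0.  Letting each root play the role of t, all pairwise products of the
   a_i vanish, so the relation has a single term, which vanishes since the roots are nonzero. *)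

lemma map_poly_of_rat_add: "map_poly of_rat (p + q) = map_poly of_rat p + map_poly of_rat q"
  by (intro poly_eqI) (simp add: coeff_map_poly of_rat_add)

lemma map_poly_of_rat_uminus: "map_poly of_rat (- p) = - map_poly of_rat p"
  by (intro poly_eqI) (simp add: coeff_map_poly of_rat_minus)

lemma poly_map_poly_of_rat_pCons [simp]:
  "poly (map_poly of_rat (pCons c p)) x = of_rat c + x * poly (map_poly of_rat p) x"
  by (simp add: map_poly_pCons)

lemma poly_map_poly_of_rat_add [simp]:
  "poly (map_poly of_rat (p + q)) x = poly (map_poly of_rat p) x + poly (map_poly of_rat q) x"
  by (simp add: map_poly_of_rat_add)

lemma poly_map_poly_of_rat_uminus [simp]:
  "poly (map_poly of_rat (- p)) x = - poly (map_poly of_rat p) x"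
  by (simp add: map_poly_of_rat_uminus)

lemma poly_map_poly_of_rat_diff [simp]:
  "poly (map_poly of_rat (p - q)) x = poly (map_poly of_rat p) x - poly (map_poly of_rat q) x"
  using poly_map_poly_of_rat_add[of p "- q"] by simp

lemma poly_map_poly_of_rat_smult [simp]:
  "poly (map_poly of_rat (smult c p)) x = of_rat c * poly (map_poly of_rat p) x"
  by (simp add: map_poly_smult of_rat_mult)

lemma poly_map_poly_of_rat_mult [simp]:
  "poly (map_poly of_rat (p * q)) x = poly (map_poly of_rat p) x * poly (map_poly of_rat q) x"
  by (induction p) (simp_all add: algebra_simps)

lemma poly_map_poly_of_rat_pcompose [simp]:
  "poly (map_poly of_rat (pcompose p r)) x = poly (map_poly of_rat p) (poly (map_poly of_rat r) x)"
  by (induction p) (simp_all add: pcompose_pCons)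

lemmas of_rat_hom_simps = of_rat_add of_rat_diff of_rat_minus of_rat_mult of_rat_power

lemma irreducible_dvd_of_common_root:
  fixes t :: "'a :: field_char_0"
  assumes "irreducible p"
    and "poly (map_poly of_rat p) t = 0" and "poly (map_poly of_rat r) t = 0"
  shows "p dvd r"
proof (rule ccontr)
  assume "\<not> p dvd r"
  with assms(1) have "coprime p r"
    by (intro prime_elem_imp_coprime field_poly_irreducible_imp_prime)
  then have "fst (bezout_coefficients p r) * p + snd (bezout_coefficients p r) * r = 1"
    by (simp add: bezout_coefficients_fst_snd coprime_imp_gcd_eq_1)
  then have "poly (map_poly of_rat (fst (bezout_coefficients p r) * p
               + snd (bezout_coefficients p r) * r)) t = (1 :: 'a)"
    by simp
  with assms(2,3) show False by simp
qed

lemma irreducible_root_transfer: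
  fixes t t' :: "'a :: field_char_0"
  assumes "irreducible p"
    and "poly (map_poly of_rat p) t = 0" and "poly (map_poly of_rat p) t' = 0"
    and "poly (map_poly of_rat r) t = 0"
  shows "poly (map_poly of_rat r) t' = 0"
proof -
  from irreducible_dvd_of_common_root[OF assms(1,2,4)] obtain k where "r = p * k" ..
  with assms(3) show ?thesis by simp
qed

lemma irreducible_root_low_degree_eq_0:
  fixes t :: "'a :: field_char_0"
  assumes "irreducible p" and "poly (map_poly of_rat p) t = 0"
    and "poly (map_poly of_rat r) t = 0" and "degree r < degree p"
  shows "r = 0"
proof (rule ccontr)
  assume "r \<noteq> 0"
  with irreducible_dvd_of_common_root[OF assms(1-3)] have "degree p \<le> degree r"
    by (rule dvd_imp_degree_le)
  with assms(4) show False by simp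
qed

lemma irreducible_root_low_degree_in_square_eq_0:
  fixes t :: "'a :: field_char_0"
  assumes "irreducible p" and "poly (map_poly of_rat p) t = 0"
    and "poly (map_poly of_rat r) (t\<^sup>2) = 0" and "2 * degree r < degree p"
  shows "r = 0"
proof -
  have "poly (map_poly of_rat (pcompose r [:0, 0, 1:])) t = 0"
    using assms(3) by (simp add: power2_eq_square)
  moreover have "degree (pcompose r [:0, 0, 1:]) < degree p"
    using assms(4) by (simp add: degree_pcompose)
  ultimately have "pcompose r [:0, 0, 1:] = 0"
    by (rule irreducible_root_low_degree_eq_0[OF assms(1,2)])
  then show ?thesis by (rule pcompose_eq_0) simp
qed

lemma irreducible_even_root_square_parts:
  fixes t :: "'a :: field_char_0"
  assumes "irreducible p" and "poly (map_poly of_rat p) t = 0"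
    and "poly (map_poly of_rat p) (- t) = 0" and "t \<noteq> 0"
    and "(poly (map_poly of_rat v) (t\<^sup>2) + t * poly (map_poly of_rat w) (t\<^sup>2))\<^sup>2
           = poly (map_poly of_rat g) (t\<^sup>2)"
  shows "poly (map_poly of_rat v) (t\<^sup>2) * poly (map_poly of_rat w) (t\<^sup>2) = 0"
proof -
  define r where
    "r = pcompose (v * v + [:0, 1:] * (w * w) - g) [:0, 0, 1:] + [:0, 2:] * pcompose (v * w) [:0, 0, 1:]"
  have poly_r: "poly (map_poly of_rat r) x
      = (poly (map_poly of_rat v) (x\<^sup>2) + x * poly (map_poly of_rat w) (x\<^sup>2))\<^sup>2
        - poly (map_poly of_rat g) (x\<^sup>2)" for x :: 'a
    by (simp add: r_def power2_eq_square algebra_simps)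
  have "poly (map_poly of_rat r) (- t) = 0"
    using assms(5) by (intro irreducible_root_transfer[OF assms(1-3)]) (simp add: poly_r)
  then have "(poly (map_poly of_rat v) (t\<^sup>2) - t * poly (map_poly of_rat w) (t\<^sup>2))\<^sup>2
      = poly (map_poly of_rat g) (t\<^sup>2)"
    by (simp add: poly_r)
  with assms(5) have "(poly (map_poly of_rat v) (t\<^sup>2) + t * poly (map_poly of_rat w) (t\<^sup>2))\<^sup>2
      - (poly (map_poly of_rat v) (t\<^sup>2) - t * poly (map_poly of_rat w) (t\<^sup>2))\<^sup>2 = 0"
    by simp
  then have "4 * t * (poly (map_poly of_rat v) (t\<^sup>2) * poly (map_poly of_rat w) (t\<^sup>2)) = 0"
    by (simp add: power2_eq_square algebra_simps)
  with assms(4) show ?thesis by simp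
qed

lemma linear_relation_squared:
  fixes t p s A e a0 a1 a2 a3 :: "'a :: idom"
  assumes "t\<^sup>2 + p\<^sup>2 + s\<^sup>2 = A" and "t * p * s = e" and "e\<^sup>2 = 1"
    and "a0 + a1 * t + a2 * p + a3 * s = 0"
  shows "(4 * (a0 * a1 * t\<^sup>2 - a2 * a3 * e)
            + t * (2 * (a0\<^sup>2 + a1\<^sup>2 * t\<^sup>2) - (a2\<^sup>2 + a3\<^sup>2) * (A - t\<^sup>2)))\<^sup>2
         = (a2\<^sup>2 - a3\<^sup>2)\<^sup>2 * (t\<^sup>2 * (A - t\<^sup>2)\<^sup>2 - 4)"
proof -
  have "a2 * p + a3 * s = - (a0 + a1 * t)"
    using assms(4) by (simp add: eq_neg_iff_add_eq_0 algebra_simps)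
  then have "(a2 * p + a3 * s)\<^sup>2 = (a0 + a1 * t)\<^sup>2"
    by (simp only: power2_minus)
  then have "t * (a2\<^sup>2 - a3\<^sup>2) * (p\<^sup>2 - s\<^sup>2)
      = 4 * (a0 * a1 * t\<^sup>2 - a2 * a3 * e)
        + t * (2 * (a0\<^sup>2 + a1\<^sup>2 * t\<^sup>2) - (a2\<^sup>2 + a3\<^sup>2) * (A - t\<^sup>2))"
    using assms(1,2) by algebra
  moreover have "p\<^sup>2 + s\<^sup>2 = A - t\<^sup>2"
    using assms(1) by (simp add: eq_diff_eq add_ac)
  then have "(t * (p\<^sup>2 - s\<^sup>2))\<^sup>2 = t\<^sup>2 * (A - t\<^sup>2)\<^sup>2 - 4"
    using assms(2,3) by algebra
  then have "(t * (a2\<^sup>2 - a3\<^sup>2) * (p\<^sup>2 - s\<^sup>2))\<^sup>2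
      = (a2\<^sup>2 - a3\<^sup>2)\<^sup>2 * (t\<^sup>2 * (A - t\<^sup>2)\<^sup>2 - 4)"
    by (simp add: power_mult_distrib mult_ac)
  ultimately show ?thesis by simp
qed

lemma cubic_vieta:
  fixes y1 y2 y3 A B C :: "'a :: idom"
  assumes "y1 \<noteq> y2" "y1 \<noteq> y3" "y2 \<noteq> y3"
    and q1: "y1 ^ 3 - A * y1\<^sup>2 + B * y1 - C = 0"
    and q2: "y2 ^ 3 - A * y2\<^sup>2 + B * y2 - C = 0"
    and q3: "y3 ^ 3 - A * y3\<^sup>2 + B * y3 - C = 0"
  shows "y1 + y2 + y3 = A" and "y1 * y2 * y3 = C"
proof -
  have "(y1 - y2) * (y1\<^sup>2 + y1 * y2 + y2\<^sup>2 - A * (y1 + y2) + B) = 0"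
    using q1 q2 by algebra
  with assms(1) have s12: "y1\<^sup>2 + y1 * y2 + y2\<^sup>2 - A * (y1 + y2) + B = 0" by simp
  have "(y1 - y3) * (y1\<^sup>2 + y1 * y3 + y3\<^sup>2 - A * (y1 + y3) + B) = 0"
    using q1 q3 by algebra
  with assms(2) have s13: "y1\<^sup>2 + y1 * y3 + y3\<^sup>2 - A * (y1 + y3) + B = 0" by simp
  have "(y2 - y3) * (y1 + y2 + y3 - A) = 0"
    using s12 s13 by algebra
  with assms(3) show sum: "y1 + y2 + y3 = A" by simp
  show "y1 * y2 * y3 = C"
    using s12 sum q1 by algebra
qed

lemma poly_q_poly:
  "poly (map_poly of_rat (q_poly l m)) (x :: 'a :: field_char_0) =
     (x\<^sup>2) ^ 3 - of_int (l + m + 3) * (x\<^sup>2)\<^sup>2 + of_int (l * m + l + m + 3) * x\<^sup>2 - 1"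
  by (simp add: q_poly_def of_rat_hom_simps algebra_simps eval_nat_numeral)

lemma degree_q_poly: "degree (q_poly l m) = 6"
  by (simp add: q_poly_def)

lemma q_poly_root_uminus:
  "poly (map_poly of_rat (q_poly l m)) (- x) = poly (map_poly of_rat (q_poly l m)) x"
  by (simp add: poly_q_poly)

lemma q_poly_root_nonzero:
  "poly (map_poly of_rat (q_poly l m)) x = 0 \<Longrightarrow> x \<noteq> 0"
  by (auto simp: poly_q_poly)

lemma q_poly_roots_vieta:
  fixes \<theta>1 \<theta>2 \<theta>3 :: "'a :: field_char_0"
  assumes "distinct [\<theta>1, -\<theta>1, \<theta>2, -\<theta>2, \<theta>3, -\<theta>3]"
    and "poly (map_poly of_rat (q_poly l m)) \<theta>1 = 0"
    and "poly (map_poly of_rat (q_poly l m)) \<theta>2 = 0"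
    and "poly (map_poly of_rat (q_poly l m)) \<theta>3 = 0"
  shows "\<theta>1\<^sup>2 + \<theta>2\<^sup>2 + \<theta>3\<^sup>2 = of_int (l + m + 3)" and "(\<theta>1 * \<theta>2 * \<theta>3)\<^sup>2 = 1"
proof -
  have "\<theta>1\<^sup>2 \<noteq> \<theta>2\<^sup>2" "\<theta>1\<^sup>2 \<noteq> \<theta>3\<^sup>2" "\<theta>2\<^sup>2 \<noteq> \<theta>3\<^sup>2"
    using assms(1) by (auto simp: power2_eq_iff)
  from cubic_vieta[OF this assms(2-4)[unfolded poly_q_poly]]
  show "\<theta>1\<^sup>2 + \<theta>2\<^sup>2 + \<theta>3\<^sup>2 = of_int (l + m + 3)" and "(\<theta>1 * \<theta>2 * \<theta>3)\<^sup>2 = 1"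
    by (simp_all add: power_mult_distrib)
qed

lemma q_poly_root_square_equation:
  fixes t :: complex and b c d :: rat
  assumes irr: "irreducible (q_poly l m)" and root: "poly (map_poly of_rat (q_poly l m)) t = 0"
    and eq: "(of_rat b * t\<^sup>2 - of_rat c)\<^sup>2 = (of_rat d)\<^sup>2 * (t\<^sup>2 * (of_int (l + m + 3) - t\<^sup>2)\<^sup>2 - 4)"
  shows "b = 0 \<and> c = 0"
proof -
  define A where "A = rat_of_int (l + m + 3)"
  define B where "B = rat_of_int (l * m + l + m + 3)"
  define y where "y = t\<^sup>2"
  have A: "of_rat A = (of_int (l + m + 3) :: complex)"
    unfolding A_def by (rule of_rat_of_int_eq)
  have B: "of_rat B = (of_int (l * m + l + m + 3) :: complex)"
    unfolding B_def by (rule of_rat_of_int_eq)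
  have cubic: "y ^ 3 - of_rat A * y\<^sup>2 + of_rat B * y - 1 = 0"
    using root by (simp add: poly_q_poly y_def A B)
  define h where "h = [:c\<^sup>2 + 3 * d\<^sup>2, - 2 * b * c - d\<^sup>2 * (A\<^sup>2 - B), b\<^sup>2 + A * d\<^sup>2:]"
  have "poly (map_poly of_rat h) y
      = (of_rat b * y - of_rat c)\<^sup>2 - (of_rat d)\<^sup>2 * (y * (of_rat A - y)\<^sup>2 - 4)
        + (of_rat d)\<^sup>2 * (y ^ 3 - of_rat A * y\<^sup>2 + of_rat B * y - 1)"
    unfolding h_def by (simp add: of_rat_hom_simps) algebra
  also have "\<dots> = 0"
    using eq cubic by (simp add: y_def A)
  finally have "poly (map_poly of_rat h) y = 0" .
  then have "h = 0"
    unfolding y_def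
    by (rule irreducible_root_low_degree_in_square_eq_0[OF irr root]) (simp add: h_def degree_q_poly)
  then have "c\<^sup>2 + 3 * d\<^sup>2 = 0" and "b\<^sup>2 + A * d\<^sup>2 = 0"
    by (simp_all add: h_def)
  then show ?thesis
    by (auto simp: add_nonneg_eq_0_iff)
qed

lemma q_poly_root_linear_relation_products:
  fixes t p s :: complex and a0 a1 a2 a3 e :: rat
  assumes irr: "irreducible (q_poly l m)" and root: "poly (map_poly of_rat (q_poly l m)) t = 0"
    and sum: "t\<^sup>2 + p\<^sup>2 + s\<^sup>2 = of_int (l + m + 3)" and prod: "t * p * s = of_rat e"
    and e: "e\<^sup>2 = 1"
    and rel: "of_rat a0 + of_rat a1 * t + of_rat a2 * p + of_rat a3 * s = 0"
  shows "a0 * a1 = 0 \<and> a2 * a3 = 0"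
proof -
  define A where "A = rat_of_int (l + m + 3)"
  define v where "v = [:- 4 * a2 * a3 * e, 4 * a0 * a1:]"
  define w where "w = [:2 * a0\<^sup>2 - (a2\<^sup>2 + a3\<^sup>2) * A, 2 * a1\<^sup>2 + a2\<^sup>2 + a3\<^sup>2:]"
  define g where "g = smult ((a2\<^sup>2 - a3\<^sup>2)\<^sup>2) [:-4, A\<^sup>2, -2 * A, 1:]"
  define y where "y = t\<^sup>2"
  have A: "of_rat A = (of_int (l + m + 3) :: complex)"
    unfolding A_def by (rule of_rat_of_int_eq)
  have "(4 * (of_rat a0 * of_rat a1 * t\<^sup>2 - of_rat a2 * of_rat a3 * of_rat e)
          + t * (2 * ((of_rat a0)\<^sup>2 + (of_rat a1)\<^sup>2 * t\<^sup>2)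
                 - ((of_rat a2)\<^sup>2 + (of_rat a3)\<^sup>2) * (of_rat A - t\<^sup>2)))\<^sup>2
        = ((of_rat a2)\<^sup>2 - (of_rat a3)\<^sup>2)\<^sup>2 * (t\<^sup>2 * (of_rat A - t\<^sup>2)\<^sup>2 - 4)"
    by (rule linear_relation_squared[OF _ prod _ rel])
       (use sum e in \<open>simp_all add: A flip: of_rat_power\<close>)
  then have square: "(poly (map_poly of_rat v) y + t * poly (map_poly of_rat w) y)\<^sup>2
                     = poly (map_poly of_rat g) y"
    unfolding v_def w_def g_def y_def by (simp add: of_rat_hom_simps) algebra
  have "poly (map_poly of_rat v) y * poly (map_poly of_rat w) y = 0"
    unfolding y_def
    by (rule irreducible_even_root_square_parts[OF irr root _ q_poly_root_nonzero[OF root]])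
       (use root square in \<open>simp_all add: q_poly_root_uminus y_def\<close>)
  then consider "poly (map_poly of_rat v) y = 0" | "poly (map_poly of_rat w) y = 0"
    by auto
  then show ?thesis
  proof cases
    case 1
    then have "v = 0"
      unfolding y_def
      by (rule irreducible_root_low_degree_in_square_eq_0[OF irr root]) (simp add: v_def degree_q_poly)
    with e show ?thesis by (auto simp: v_def)
  next
    case 2
    have poly_v: "poly (map_poly of_rat v) y = of_rat (4 * a0 * a1) * y - of_rat (4 * a2 * a3 * e)"
      by (simp add: v_def of_rat_hom_simps algebra_simps)
    have poly_g: "poly (map_poly of_rat g) y
        = (of_rat (a2\<^sup>2 - a3\<^sup>2))\<^sup>2 * (y * (of_rat A - y)\<^sup>2 - 4)"
      unfolding g_def by (simp add: of_rat_hom_simps) algebra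
    from 2 square have "(poly (map_poly of_rat v) y)\<^sup>2 = poly (map_poly of_rat g) y"
      by simp
    then have "(of_rat (4 * a0 * a1) * t\<^sup>2 - of_rat (4 * a2 * a3 * e))\<^sup>2
        = (of_rat (a2\<^sup>2 - a3\<^sup>2))\<^sup>2 * (t\<^sup>2 * (of_int (l + m + 3) - t\<^sup>2)\<^sup>2 - 4)"
      unfolding poly_v poly_g by (simp only: y_def A)
    from q_poly_root_square_equation[OF irr root this] e show ?thesis by auto
  qed
qed

theorem theorem2p5:
  fixes l m :: int and \<theta>1 \<theta>2 \<theta>3 :: complex
  assumes "l > 0" and "m > 0"
    and "distinct [\<theta>1, -\<theta>1, \<theta>2, -\<theta>2, \<theta>3, -\<theta>3]"
    and "poly (map_poly of_rat (q_poly l m)) \<theta>1 = 0"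
    and "poly (map_poly of_rat (q_poly l m)) \<theta>2 = 0"
    and "poly (map_poly of_rat (q_poly l m)) \<theta>3 = 0"
    and "irreducible (q_poly l m)"
  shows "\<forall>a0 a1 a2 a3 :: rat.
           of_rat a0 + of_rat a1 * \<theta>1 + of_rat a2 * \<theta>2 + of_rat a3 * \<theta>3 = 0
           \<longrightarrow> a0 = 0 \<and> a1 = 0 \<and> a2 = 0 \<and> a3 = 0"
proof (intro allI impI)
  fix a0 a1 a2 a3 :: rat
  assume rel: "of_rat a0 + of_rat a1 * \<theta>1 + of_rat a2 * \<theta>2 + of_rat a3 * \<theta>3 = 0"
  note roots = assms(4-6) and irr = assms(7)
  note sum = q_poly_roots_vieta(1)[OF assms(3-6)]
  have "\<theta>1 * \<theta>2 * \<theta>3 = 1 \<or> \<theta>1 * \<theta>2 * \<theta>3 = -1"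
    using q_poly_roots_vieta(2)[OF assms(3-6)] by (simp add: power2_eq_1_iff)
  then obtain e :: rat where e: "\<theta>1 * \<theta>2 * \<theta>3 = of_rat e" "e\<^sup>2 = 1"
    by (metis of_rat_1 of_rat_minus power2_minus power_one)
  have "a0 * a1 = 0 \<and> a2 * a3 = 0"
    by (rule q_poly_root_linear_relation_products[OF irr roots(1) sum e rel])
  moreover have "a0 * a2 = 0 \<and> a1 * a3 = 0"
    by (rule q_poly_root_linear_relation_products[OF irr roots(2), of \<theta>1 \<theta>3 e])
       (use sum e rel in \<open>simp_all add: algebra_simps\<close>)
  moreover have "a0 * a3 = 0 \<and> a1 * a2 = 0"
    by (rule q_poly_root_linear_relation_products[OF irr roots(3), of \<theta>1 \<theta>2 e])
       (use sum e rel in \<open>simp_all add: algebra_simps\<close>)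
  moreover have "\<theta>1 \<noteq> 0" "\<theta>2 \<noteq> 0" "\<theta>3 \<noteq> 0"
    using roots by (simp_all add: q_poly_root_nonzero)
  ultimately show "a0 = 0 \<and> a1 = 0 \<and> a2 = 0 \<and> a3 = 0"
    using rel by auto
qed

end
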